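(* Let $\lambda$ be a partition, $n\ge\ell(\lambda)$, and $M\in\mathrm{MLQ}(\lambda,n)$. Then $\operatorname{maj}_G(M)=\operatorname{maj}(M)$.
   Context: For a partition $\lambda$ with conjugate $\lambda'$ and $L=\lambda_1$, $\mathrm{MLQ}(\lambda,n)$ is the set of tuples $M=(B_1,\dots,B_L)$ of subsets of $[n]$ with $|B_j|=\lambda'_j$, drawn with rows $1..L$ bottom to top, columns $1..n$ left to right; cells $(r,j)$ with $j\in B_r$ are particles (balls), the others anti-particles. Major index $\operatorname{maj}$: for $r=L,\dots,2$, unlabelled balls of row $r$ get label $r$; balls of row $r$ in decreasing label order (left to right among ties) are each paired with the first unlabelled ball of row $r-1$ weakly to the right cyclically modulo $n$, which gets the same label; the pairing wraps if the lower ball is strictly left of the upper one. $\operatorname{maj}(M)=\sum(\ell(p)-r(p)+1)$ over wrapping pairings, $r(p)$ the row of the upper ball and $\ell(p)$ its label. Generalized major index $\operatorname{maj}_G$: label all cells. Row $L$: particles $L$, anti-particles $L-1$. For $r=L-1,\dots,1$: with $w_1,\dots,w_n$ the labels of row $r+1$, order columns $i_1,\dots,i_n$ with $w_{i_1}\ge\cdots\ge w_{i_n}$, ties by increasing column; $s=|B_r|$. Particle phase: for $k=1,\dots,s$, cell $(r+1,i_k)$ is paired with the first unlabelled particle of row $r$ weakly right of column $i_k$ cyclically, which gets label $w_{i_k}$; wrapping if its column is $<i_k$. Anti-particle phase: for $k=n,\dots,s+1$, cell $(r+1,i_k)$ is paired with the first unlabelled anti-particle of row $r$ weakly left of column $i_k$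 cyclically, which gets label $w_{i_k}-1$; wrapping if its column is $>i_k$. $\operatorname{maj}_G(M)=\sum_p(\ell(p)-r(p)+1)-\sum_{p'}(\ell(p')-r(p')+1)$, $p$ over wrapping particle-phase pairings, $p'$ over wrapping anti-particle-phase pairings, $r(\cdot)$ the row and $\ell(\cdot)$ the label of the upper cell. *)

theory Defs
  imports Main "HOL-Library.Product_Lexorder"
begin

definition is_partition :: "nat list \<Rightarrow> bool" where
  "is_partition lam \<longleftrightarrow> sorted_wrt (\<ge>) lam \<and> (\<forall>x\<in>set lam. 0 < x)"

definition conj_part :: "nat list \<Rightarrow> nat \<Rightarrow> nat" where
  "conj_part lam j = length (filter (\<lambda>x. j \<le> x) lam)"

definition largest_part :: "nat list \<Rightarrow> nat" where
  "largest_part lam = (if lam = [] then 0 else hd lam)"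

text \<open>MLQ(lam, n): lists [B_1, ..., B_L] (row r is entry r-1) of subsets of
  {1..n} with |B_j| = lam'_j.\<close>
definition MLQ :: "nat list \<Rightarrow> nat \<Rightarrow> nat set list set" where
  "MLQ lam n = {M. length M = largest_part lam \<and>
     (\<forall>j < length M. M ! j \<subseteq> {1..n} \<and> card (M ! j) = conj_part lam (Suc j))}"

text \<open>First column of A weakly right of i, cyclically mod n.\<close>
definition cyc_right :: "nat \<Rightarrow> nat \<Rightarrow> nat set \<Rightarrow> nat" where
  "cyc_right n i A = (let d = (LEAST d. (i + d - 1) mod n + 1 \<in> A) in (i + d - 1) mod n + 1)"

text \<open>First column of A weakly left of i, cyclically mod n.\<close>
definition cyc_left :: "nat \<Rightarrow> nat \<Rightarrow> nat set \<Rightarrow> nat" where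
  "cyc_left n i A = (let d = (LEAST d. (i - 1 + n - d mod n) mod n + 1 \<in> A)
                     in (i - 1 + n - d mod n) mod n + 1)"

text \<open>State: (unlabelled cells of the lower
  row, labels of lower row, accumulated contribution). \<open>ru\<close> is the row of the upper cell,
  \<open>lab\<close> the labels of the upper row, \<open>c\<close> the column of the upper cell.\<close>
definition step_p :: "nat \<Rightarrow> nat \<Rightarrow> (nat \<Rightarrow> int) \<Rightarrow> nat \<Rightarrow>
    nat set \<times> (nat \<Rightarrow> int) \<times> int \<Rightarrow> nat set \<times> (nat \<Rightarrow> int) \<times> int" where
  "step_p n ru lab c st = (case st of (A, L, s) \<Rightarrow>
     (let d = cyc_right n c A in
       (A - {d}, L(d := lab c), s + (if d < c then lab c - int ru + 1 else 0))))"

text \<open>One pairing step of the anti-particle type (lower cell gets label of upper minus 1;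
  wrapping if lower column strictly right).\<close>
definition step_a :: "nat \<Rightarrow> nat \<Rightarrow> (nat \<Rightarrow> int) \<Rightarrow> nat \<Rightarrow>
    nat set \<times> (nat \<Rightarrow> int) \<times> int \<Rightarrow> nat set \<times> (nat \<Rightarrow> int) \<times> int" where
  "step_a n ru lab c st = (case st of (A, L, s) \<Rightarrow>
     (let d = cyc_left n c A in
       (A - {d}, L(d := lab c - 1), s + (if c < d then lab c - int ru + 1 else 0))))"

text \<open>Processing upper row \<open>r\<close> (balls \<open>Bu\<close>, labels \<open>lab\<close>) onto lower row with balls \<open>Bl\<close>.\<close>
definition maj_step :: "nat \<Rightarrow> nat \<Rightarrow> nat set \<Rightarrow> (nat \<Rightarrow> int) \<Rightarrow> nat set \<Rightarrow> (nat \<Rightarrow> int) \<times> int" where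
  "maj_step n r Bu lab Bl =
     (let ord = sort_key (\<lambda>c. (- lab c, c)) (sorted_list_of_set Bu);
          (A, L, s) = fold (step_p n r lab) ord (Bl, \<lambda>_. 0, 0)
      in ((\<lambda>c. if c \<in> A then int r - 1 else L c), s))"

fun maj_from :: "nat \<Rightarrow> nat set list \<Rightarrow> nat \<Rightarrow> (nat \<Rightarrow> int) \<Rightarrow> int" where
  "maj_from n M 0 lab = 0"
| "maj_from n M (Suc 0) lab = 0"
| "maj_from n M (Suc (Suc k)) lab =
     (let (lab', s) = maj_step n (Suc (Suc k)) (M ! Suc k) lab (M ! k)
      in s + maj_from n M (Suc k) lab')"

definition maj :: "nat \<Rightarrow> nat set list \<Rightarrow> int" where
  "maj n M = maj_from n M (length M) (\<lambda>_. int (length M))"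

text \<open>Upper row \<open>ru = r+1\<close> with labels \<open>w\<close> on all columns, lower row particles \<open>Bl\<close>.\<close>
definition majG_step :: "nat \<Rightarrow> nat \<Rightarrow> (nat \<Rightarrow> int) \<Rightarrow> nat set \<Rightarrow> (nat \<Rightarrow> int) \<times> int" where
  "majG_step n ru w Bl =
     (let ord = sort_key (\<lambda>c. (- w c, c)) [1..<Suc n];
          s = card Bl;
          (A1, L1, s1) = fold (step_p n ru w) (take s ord) (Bl, \<lambda>_. 0, 0);
          (A2, L2, s2) = fold (step_a n ru w) (rev (drop s ord)) ({1..n} - Bl, L1, 0)
      in (L2, s1 - s2))"

fun majG_from :: "nat \<Rightarrow> nat set list \<Rightarrow> nat \<Rightarrow> (nat \<Rightarrow> int) \<Rightarrow> int" where
  "majG_from n M 0 w = 0"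
| "majG_from n M (Suc 0) w = 0"
| "majG_from n M (Suc (Suc k)) w =
     (let (w', s) = majG_step n (Suc (Suc k)) w (M ! k)
      in s + majG_from n M (Suc k) w')"

definition majG :: "nat \<Rightarrow> nat set list \<Rightarrow> int" where
  "majG n M = majG_from n M (length M)
     (\<lambda>c. if c \<in> M ! (length M - 1) then int (length M) else int (length M) - 1)"

end

theory Submission
  imports Defs "HOL-Library.Multiset"
begin

text \<open>In \<open>maj\<^sub>G\<close>, row \<open>r + 1\<close> carries on each ball its \<open>maj\<close> label, which is at least
  \<open>r + 1\<close>, and on each anti-particle the label \<open>r\<close>. Sorting by decreasing label therefore lists
  the balls first, in the order in which \<open>maj\<close> processes them, so the particle phase begins with
  exactly the pairings of \<open>maj\<close>. Every remaining pairing, in either phase, starts from a cell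
  labelled \<open>r\<close>, so it contributes \<open>r - (r + 1) + 1 = 0\<close> whether or not it wraps; it gives the
  still unlabelled balls of row \<open>r\<close> the label \<open>r\<close>, as \<open>maj\<close> does, and the anti-particles the
  label \<open>r - 1\<close>. So the same labelling invariant holds one row down, and the two statistics
  agree row by row.\<close>

lemma cyc_right_mem:
  assumes "A \<noteq> {}" "A \<subseteq> {1..n}"
  shows "cyc_right n i A \<in> A"
proof -
  obtain a where "a \<in> A" using assms(1) by blast
  then obtain b where a: "a = Suc b" and "b < n" using assms(2) by (cases a) auto
  then have "i \<le> n * i" by simp
  then have "i + (n * i + a - i) - 1 = b + n * i" unfolding a by linarith
  then have "(i + (n * i + a - i) - 1) mod n + 1 = a" using \<open>b < n\<close> a by simp
  then show ?thesis
    unfolding cyc_right_def Let_def using \<open>a \<in> A\<close> by (metis (mono_tags, lifting) LeastI)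
qed

lemma cyc_left_mem:
  assumes "A \<noteq> {}" "A \<subseteq> {1..n}"
  shows "cyc_left n i A \<in> A"
proof -
  obtain a where "a \<in> A" using assms(1) by blast
  then obtain b where a: "a = Suc b" and "b < n" using assms(2) by (cases a) auto
  define m where "m = i - 1 + n - b"
  have "m + b = i - 1 + n" using \<open>b < n\<close> unfolding m_def by simp
  then have "i - 1 + n - m mod n = b + m div n * n"
    by (metis add.commute diff_add_inverse div_mult_mod_eq add.assoc)
  then have "(i - 1 + n - (m mod n) mod n) mod n + 1 = a" using \<open>b < n\<close> a by simp
  then show ?thesis
    unfolding cyc_left_def Let_def using \<open>a \<in> A\<close> by (metis (mono_tags, lifting) LeastI)
qed

definition pairing_step ::
    "(nat \<Rightarrow> nat set \<Rightarrow> nat) \<Rightarrow> (nat \<Rightarrow> int) \<Rightarrow> (nat \<Rightarrow> nat \<Rightarrow> int) \<Rightarrow> nat \<Rightarrow>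
     nat set \<times> (nat \<Rightarrow> int) \<times> int \<Rightarrow> nat set \<times> (nat \<Rightarrow> int) \<times> int" where
  "pairing_step pick label gain c st = (case st of (A, L, s) \<Rightarrow>
     (let d = pick c A in (A - {d}, L(d := label c), s + gain c d)))"

lemma pairing_step_apply [simp]:
  "pairing_step pick label gain c (A, L, s) =
    (A - {pick c A}, L(pick c A := label c), s + gain c (pick c A))"
  by (simp add: pairing_step_def Let_def)

lemma step_p_eq_pairing_step:
  "step_p n ru lab = pairing_step (cyc_right n) lab (\<lambda>c d. if d < c then lab c - int ru + 1 else 0)"
  by (simp add: fun_eq_iff step_p_def pairing_step_def)

lemma step_a_eq_pairing_step:
  "step_a n ru lab = pairing_step (cyc_left n) (\<lambda>c. lab c - 1) (\<lambda>c d. if c < d then lab c - int ru + 1 else 0)"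
  by (simp add: fun_eq_iff step_a_def pairing_step_def)

lemma fold_pairing_step:
  assumes "finite A" and pick: "\<And>c B. B \<subseteq> A \<Longrightarrow> B \<noteq> {} \<Longrightarrow> pick c B \<in> B"
    and "length xs \<le> card A"
    and "fold (pairing_step pick label gain) xs (A, L, s) = (A', L', s')"
  shows "A' \<subseteq> A \<and> card A' = card A - length xs \<and> (\<forall>c. c \<notin> A - A' \<longrightarrow> L' c = L c) \<and>
    (\<forall>c\<in>A - A'. L' c \<in> label ` set xs)"
  using assms
proof (induction xs arbitrary: A L s)
  case Nil
  then show ?case by simp
next
  case (Cons x xs)
  define d where "d = pick x A"
  have "A \<noteq> {}" using Cons.prems(3) by auto
  then have "d \<in> A" using Cons.prems(2)[of A x] unfolding d_def by blast
  have rest: "fold (pairing_step pick label gain) xs (A - {d}, L(d := label x), s + gain x d) = (A', L', s')"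
    using Cons.prems(4) by (simp add: d_def)
  have "card (A - {d}) = card A - 1" using \<open>d \<in> A\<close> Cons.prems(1) by simp
  moreover have "\<And>c B. B \<subseteq> A - {d} \<Longrightarrow> B \<noteq> {} \<Longrightarrow> pick c B \<in> B"
    using Cons.prems(2) by blast
  ultimately have "A' \<subseteq> A - {d} \<and> card A' = card (A - {d}) - length xs \<and>
      (\<forall>c. c \<notin> (A - {d}) - A' \<longrightarrow> L' c = (L(d := label x)) c) \<and>
      (\<forall>c\<in>(A - {d}) - A'. L' c \<in> label ` set xs)"
    using Cons.IH[OF _ _ _ rest] Cons.prems(1,3) by simp
  then show ?case using \<open>d \<in> A\<close> \<open>card (A - {d}) = card A - 1\<close> by (auto split: if_splits)
qed

lemma fold_pairing_step_const:
  assumes "finite A" and pick: "\<And>c B. B \<subseteq> A \<Longrightarrow> B \<noteq> {} \<Longrightarrow> pick c B \<in> B"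
    and "length xs = card A" and "\<forall>c\<in>set xs. label c = v \<and> gain c = (\<lambda>_. 0)"
  shows "fold (pairing_step pick label gain) xs (A, L, s) = ({}, \<lambda>c. if c \<in> A then v else L c, s)"
  using assms
proof (induction xs arbitrary: A L)
  case Nil
  then show ?case by simp
next
  case (Cons x xs)
  define d where "d = pick x A"
  have "A \<noteq> {}" using Cons.prems(3) by auto
  then have "d \<in> A" using Cons.prems(2)[of A x] unfolding d_def by blast
  have "fold (pairing_step pick label gain) xs (A - {d}, L(d := v), s) =
      ({}, \<lambda>c. if c \<in> A - {d} then v else (L(d := v)) c, s)"
    using Cons.prems \<open>d \<in> A\<close> by (intro Cons.IH) auto
  moreover have "(\<lambda>c. if c \<in> A - {d} then v else (L(d := v)) c) = (\<lambda>c. if c \<in> A then v else L c)"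
    using \<open>d \<in> A\<close> by auto
  ultimately show ?case using Cons.prems(4) by (simp add: d_def)
qed

lemma fold_step_p_const_label:
  assumes "A \<subseteq> {1..n}" "length xs = card A" "\<forall>c\<in>set xs. lab c = int ru - 1"
  shows "fold (step_p n ru lab) xs (A, L, s) = ({}, \<lambda>c. if c \<in> A then int ru - 1 else L c, s)"
  unfolding step_p_eq_pairing_step
proof (intro fold_pairing_step_const)
  show "\<And>c B. B \<subseteq> A \<Longrightarrow> B \<noteq> {} \<Longrightarrow> cyc_right n c B \<in> B"
    using assms(1) by (meson cyc_right_mem order_trans)
qed (use assms finite_subset[OF assms(1)] in auto)

lemma fold_step_a_const_label:
  assumes "A \<subseteq> {1..n}" "length xs = card A" "\<forall>c\<in>set xs. lab c = int ru - 1"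
  shows "fold (step_a n ru lab) xs (A, L, s) = ({}, \<lambda>c. if c \<in> A then int ru - 2 else L c, s)"
  unfolding step_a_eq_pairing_step
proof (intro fold_pairing_step_const)
  show "\<And>c B. B \<subseteq> A \<Longrightarrow> B \<noteq> {} \<Longrightarrow> cyc_left n c B \<in> B"
    using assms(1) by (meson cyc_left_mem order_trans)
qed (use assms finite_subset[OF assms(1)] in auto)

lemma sort_key_sorted_list_of_set_Un:
  fixes f :: "'a::linorder \<Rightarrow> 'b::linorder"
  assumes "finite A" "finite B" "inj_on f (A \<union> B)" and less: "\<And>a b. a \<in> A \<Longrightarrow> b \<in> B \<Longrightarrow> f a < f b"
  shows "sort_key f (sorted_list_of_set (A \<union> B)) =
    sort_key f (sorted_list_of_set A) @ sort_key f (sorted_list_of_set B)"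
proof (rule sort_key_inj_key_eq)
  have "A \<inter> B = {}" using less by fastforce
  then show "mset (sorted_list_of_set (A \<union> B)) =
      mset (sort_key f (sorted_list_of_set A) @ sort_key f (sorted_list_of_set B))"
    using assms(1,2) by (subst set_eq_iff_mset_eq_distinct[symmetric]) auto
  show "inj_on f (set (sorted_list_of_set (A \<union> B)))" using assms(1-3) by simp
  show "sorted (map f (sort_key f (sorted_list_of_set A) @ sort_key f (sorted_list_of_set B)))"
    using assms(1,2) by (auto simp: sorted_append intro: less_imp_le less)
qed

lemma insort_key_cong: "\<forall>y\<in>insert x (set ys). f y = g y \<Longrightarrow> insort_key f x ys = insort_key g x ys"
  by (induction ys) auto

lemma sort_key_cong: "\<forall>x\<in>set xs. f x = g x \<Longrightarrow> sort_key f xs = sort_key g xs"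
  by (induction xs) (auto intro!: insort_key_cong)

lemma maj_step_cong:
  assumes "finite Bu" "\<forall>c\<in>Bu. lab c = lab' c"
  shows "maj_step n r Bu lab Bl = maj_step n r Bu lab' Bl"
proof -
  have "sort_key (\<lambda>c. (- lab c, c)) (sorted_list_of_set Bu) =
      sort_key (\<lambda>c. (- lab' c, c)) (sorted_list_of_set Bu)"
    using assms by (intro sort_key_cong) simp
  moreover have "fold (step_p n r lab) xs st = fold (step_p n r lab') xs st" if "set xs \<subseteq> Bu" for xs st
    using that assms(2) by (intro fold_cong) (auto simp: step_p_def Let_def fun_eq_iff)
  ultimately show ?thesis unfolding maj_step_def using assms(1) by simp
qed

definition majG_row_labels :: "nat \<Rightarrow> nat \<Rightarrow> nat set \<Rightarrow> (nat \<Rightarrow> int) \<Rightarrow> (nat \<Rightarrow> int) \<Rightarrow> bool" where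
  "majG_row_labels n r B lab w \<longleftrightarrow>
     (\<forall>c\<in>B. w c = lab c \<and> int r \<le> lab c) \<and> (\<forall>c\<in>{1..n} - B. w c = int r - 1)"

lemma majG_order_split:
  assumes "B \<subseteq> {1..n}" "majG_row_labels n (Suc r) B lab w"
  shows "sort_key (\<lambda>c. (- w c, c)) [1..<Suc n] =
    sort_key (\<lambda>c. (- w c, c)) (sorted_list_of_set B) @
    sort_key (\<lambda>c. (- w c, c)) (sorted_list_of_set ({1..n} - B))"
proof -
  have "[1..<Suc n] = sorted_list_of_set (B \<union> ({1..n} - B))"
    using assms(1) by (metis Diff_partition atLeastLessThanSuc_atLeastAtMost sorted_list_of_set_range)
  moreover have "w a > w b" if "a \<in> B" "b \<in> {1..n} - B" for a b
    using assms(2) that unfolding majG_row_labels_def by force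
  ultimately show ?thesis
    using finite_subset[OF assms(1)]
    by (simp only:) (rule sort_key_sorted_list_of_set_Un, auto intro: inj_onI)
qed

lemma maj_step_pairings:
  assumes Bu: "Bu \<subseteq> {1..n}" and Bl: "Bl \<subseteq> {1..n}" and "card Bu \<le> card Bl"
    and maj: "maj_step n ru Bu lab Bl = (lab', s)"
  obtains A L
  where "fold (step_p n ru lab) (sort_key (\<lambda>c. (- lab c, c)) (sorted_list_of_set Bu)) (Bl, \<lambda>_. 0, 0) =
      (A, L, s)"
    and "lab' = (\<lambda>c. if c \<in> A then int ru - 1 else L c)"
    and "A \<subseteq> Bl" "card A = card Bl - card Bu" "\<forall>c\<in>Bl - A. L c \<in> lab ` Bu"
proof -
  let ?U = "sort_key (\<lambda>c. (- lab c, c)) (sorted_list_of_set Bu)"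
  have "finite Bu" "finite Bl" using Bu Bl finite_subset by auto
  obtain A L where fold: "fold (step_p n ru lab) ?U (Bl, \<lambda>_. 0, 0) = (A, L, s)"
    and "lab' = (\<lambda>c. if c \<in> A then int ru - 1 else L c)"
    using maj unfolding maj_step_def by (auto simp: Let_def split: prod.splits)
  moreover have "A \<subseteq> Bl \<and> card A = card Bl - card Bu \<and> (\<forall>c\<in>Bl - A. L c \<in> lab ` Bu)"
    using fold_pairing_step[OF \<open>finite Bl\<close> _ _ fold[unfolded step_p_eq_pairing_step]]
      cyc_right_mem Bl \<open>finite Bu\<close> \<open>card Bu \<le> card Bl\<close>
    by (auto dest: order_trans)
  ultimately show ?thesis using that by blast
qed

lemma majG_step_eq_maj_step:
  assumes Bu: "Bu \<subseteq> {1..n}" and Bl: "Bl \<subseteq> {1..n}" and "card Bu \<le> card Bl"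
    and w: "majG_row_labels n (Suc r) Bu lab w"
    and maj: "maj_step n (Suc r) Bu lab Bl = (lab', s)"
  obtains w' where "majG_step n (Suc r) w Bl = (w', s)" and "majG_row_labels n r Bl lab' w'"
proof -
  define U where "U = sort_key (\<lambda>c. (- w c, c)) (sorted_list_of_set Bu)"
  define R where "R = sort_key (\<lambda>c. (- w c, c)) (sorted_list_of_set ({1..n} - Bu))"
  have "finite Bu" "finite Bl" using Bu Bl finite_subset by auto
  have "length U = card Bu" "length R = n - card Bu" and wR: "\<forall>c\<in>set R. w c = int r"
    using w Bu \<open>finite Bu\<close> unfolding U_def R_def majG_row_labels_def by (auto simp: card_Diff_subset)
  have "maj_step n (Suc r) Bu w Bl = (lab', s)"
    using maj maj_step_cong[OF \<open>finite Bu\<close>, of lab w] w unfolding majG_row_labels_def by simp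
  then obtain A L where particles: "fold (step_p n (Suc r) w) U (Bl, \<lambda>_. 0, 0) = (A, L, s)"
    and "lab' = (\<lambda>c. if c \<in> A then int (Suc r) - 1 else L c)"
    and A: "A \<subseteq> Bl" "card A = card Bl - card Bu" "\<forall>c\<in>Bl - A. L c \<in> w ` Bu"
    using maj_step_pairings[OF Bu Bl \<open>card Bu \<le> card Bl\<close>] unfolding U_def by blast
  then have lab': "lab' = (\<lambda>c. if c \<in> A then int r else L c)" by (simp add: fun_eq_iff)
  define R1 where "R1 = take (card A) R"
  define R2 where "R2 = rev (drop (card A) R)"
  have "card Bl \<le> n" using card_mono[OF _ Bl] by simp
  have "take (card Bl) (U @ R) = U @ R1" "rev (drop (card Bl) (U @ R)) = R2"
    using A(2) \<open>length U = card Bu\<close> \<open>card Bu \<le> card Bl\<close> unfolding R1_def R2_def by auto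
  moreover have "fold (step_p n (Suc r) w) R1 (A, L, s) = ({}, lab', s)"
    using A Bl wR \<open>length R = n - card Bu\<close> \<open>card Bl \<le> n\<close> unfolding R1_def lab'
    by (subst fold_step_p_const_label) (auto simp: fun_eq_iff dest: in_set_takeD)
  moreover have "fold (step_a n (Suc r) w) R2 ({1..n} - Bl, lab', 0) =
      ({}, \<lambda>c. if c \<in> {1..n} - Bl then int r - 1 else lab' c, 0)"
    using A Bl wR \<open>length R = n - card Bu\<close> \<open>card Bu \<le> card Bl\<close> \<open>finite Bl\<close>
    unfolding R2_def
    by (subst fold_step_a_const_label) (auto simp: card_Diff_subset dest: in_set_dropD)
  ultimately have "majG_step n (Suc r) w Bl = (\<lambda>c. if c \<in> {1..n} - Bl then int r - 1 else lab' c, s)"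
    using particles majG_order_split[OF Bu w]
    unfolding majG_step_def U_def[symmetric] R_def[symmetric] by (simp add: Let_def)
  moreover have "majG_row_labels n r Bl lab' (\<lambda>c. if c \<in> {1..n} - Bl then int r - 1 else lab' c)"
    using A(3) w unfolding majG_row_labels_def lab' by force
  ultimately show ?thesis using that by blast
qed

lemma majG_from_eq_maj_from:
  assumes "Suc k \<le> length M" and rows: "\<forall>j<length M. M ! j \<subseteq> {1..n}"
    and shrinking: "\<forall>j. Suc j < length M \<longrightarrow> card (M ! Suc j) \<le> card (M ! j)"
    and "majG_row_labels n (Suc k) (M ! k) lab w"
  shows "majG_from n M (Suc k) w = maj_from n M (Suc k) lab"
  using assms(1,4)
proof (induction k arbitrary: lab w)
  case 0
  then show ?case by simp
next
  case (Suc k)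
  obtain lab' s where maj: "maj_step n (Suc (Suc k)) (M ! Suc k) lab (M ! k) = (lab', s)"
    by fastforce
  obtain w' where "majG_step n (Suc (Suc k)) w (M ! k) = (w', s)"
    and "majG_row_labels n (Suc k) (M ! k) lab' w'"
    using majG_step_eq_maj_step[OF _ _ _ Suc.prems(2) maj] rows shrinking Suc.prems(1) by auto
  then show ?case using maj Suc.IH[of lab' w'] Suc.prems(1) by simp
qed

lemma conj_part_Suc_le: "conj_part lam (Suc j) \<le> conj_part lam j"
  unfolding conj_part_def by (induction lam) auto

theorem lemma4p30:
  fixes lam :: "nat list" and n :: nat and M :: "nat set list"
  assumes "is_partition lam" and "length lam \<le> n" and "M \<in> MLQ lam n"
  shows "majG n M = maj n M"
proof (cases "length M")
  case 0
  then show ?thesis unfolding majG_def maj_def by simp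
next
  case (Suc k)
  have rows: "\<forall>j<length M. M ! j \<subseteq> {1..n} \<and> card (M ! j) = conj_part lam (Suc j)"
    using assms(3) unfolding MLQ_def by simp
  show ?thesis unfolding majG_def maj_def Suc
  proof (rule majG_from_eq_maj_from)
    show "\<forall>j. Suc j < length M \<longrightarrow> card (M ! Suc j) \<le> card (M ! j)"
      using rows conj_part_Suc_le by simp
  qed (use rows Suc in \<open>auto simp: majG_row_labels_def\<close>)
qed

end
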